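(* Under the locking mechanism described in the context (with partial matches in the expansion lists stored independently), the global schedule of concurrently executing the edge insertion and deletion transactions is streaming consistent.
   Context: A streaming graph is a growing sequence of labelled directed edges with strictly increasing timestamps; under a sliding window, at each time point an edge may arrive and an edge may expire. A (continuous) query $Q$ with a timing order on its edges is evaluated by maintaining expansion lists: $Q$ is decomposed into edge-disjoint timing-connected subqueries $Q^1,\dots,Q^k$; for each $Q^i$ with timing sequence $\epsilon_1,\dots,\epsilon_{m}$ there is a list $L_i=\{L_i^1,\dots,L_i^{m}\}$ whose item $L_i^j$ stores the matches of the subquery $\{\epsilon_1,\dots,\epsilon_j\}$, and a list $L_0=\{L_0^1,\dots,L_0^k\}$ whose item $L_0^i$ stores matches of $Q^1\cup\dots\cup Q^i$; the items are the shared resources. Inserting an incoming edge $\sigma$ ($Ins(\sigma)$) and deleting an expired edge $\sigma'$ ($Del(\sigma')$) are each modeled as a transaction, with timestamp equal to the time the operation happens, and each is executed by its own thread as a sequence of elementary operations READ/INSERT/DELETE on individual items. Locks (shared S or exclusive X) are associated with individual items, and each item has a thread-safe FIFO wait-list of lock requests $\langle$thread id, lock type, item$\rangle$. A single main thread processes the transactions serially in timestamp order: before launching a thread $T$ it appends all of $T$'s lock requests to the ends of the wait-lists of the corresponding items, then launches $T$; launched threads run concurrently. A thread $T$ may access an item only after locking it, and it obtains the lock iff its request is at the head of that item's wait-list and the lock is compatible with the item's current status (the item is free, or both the held lock and requested lock are shared); upon obtaining the lock the request is removed from the wait-list. When $T$ finishes its computation on the item it releases the lock and wakes the thread whose request is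 now at the head of the wait-list. Each thread holds at most one lock at a time. Streaming consistency: at each time point, the answers of $Q$ are the same as those obtained by executing the insertions/deletions of edges serially in the chronological order of their timestamps. *)

theory Defs
  imports Main
begin

text \<open>Elementary operations on items (the items of the expansion lists, i.e. the shared
resources).  Items are stored independently: the store maps each item to its own value.\<close>

datatype opkind = READ | INSERT | DELETE

datatype lock = S | X

fun lock_type :: "opkind \<Rightarrow> lock" where
  "lock_type READ = S"
| "lock_type INSERT = X"
| "lock_type DELETE = X"

text \<open>An elementary operation: its kind, the item it accesses, and its effect, which,
given the thread-local state and the current value of the item, yields the new local state
and the new value of the item (for READ the value must stay unchanged, see reads_pure).\<close>

datatype ('i, 'v, 'l) elem_op =
  Op (kind: opkind) (item: 'i) (eff: "'l \<Rightarrow> 'v \<Rightarrow> 'l \<times> 'v")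

text \<open>A transaction (Ins(sigma) or Del(sigma')): an initial thread-local state and its
sequence of elementary operations.  Transactions are given as a list in timestamp order.\<close>

datatype ('i, 'v, 'l) txn =
  Txn (init: 'l) (ops: "('i, 'v, 'l) elem_op list")

definition reads_pure :: "('i, 'v, 'l) txn list \<Rightarrow> bool" where
  "reads_pure ts \<longleftrightarrow>
     (\<forall>t\<in>set ts. \<forall>eo\<in>set (ops t). kind eo = READ \<longrightarrow> (\<forall>l v. snd (eff eo l v) = v))"

fun run_ops :: "('i, 'v, 'l) elem_op list \<Rightarrow> 'l \<Rightarrow> ('i \<Rightarrow> 'v) \<Rightarrow> 'l \<times> ('i \<Rightarrow> 'v)" where
  "run_ops [] l \<sigma> = (l, \<sigma>)"
| "run_ops (eo # os) l \<sigma> =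
     (let (l', v') = eff eo l (\<sigma> (item eo)) in run_ops os l' (\<sigma>(item eo := v')))"

fun serial :: "('i, 'v, 'l) txn list \<Rightarrow> ('i \<Rightarrow> 'v) \<Rightarrow> ('i \<Rightarrow> 'v) \<times> 'l list" where
  "serial [] \<sigma> = (\<sigma>, [])"
| "serial (t # ts) \<sigma> =
     (let (l, \<sigma>') = run_ops (ops t) (init t) \<sigma>;
          (\<sigma>'', ls) = serial ts \<sigma>'
      in (\<sigma>'', l # ls))"

text \<open>A lock request is identified by (thread id, operation index); its lock type and item
are those of the corresponding operation.\<close>

definition opat :: "('i, 'v, 'l) txn list \<Rightarrow> nat \<times> nat \<Rightarrow> ('i, 'v, 'l) elem_op" where
  "opat ts r = ops (ts ! fst r) ! snd r"

record ('i, 'v, 'l) cstate =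
  store    :: "'i \<Rightarrow> 'v"
  launched :: nat                          \<comment> \<open>number of threads launched by the main thread\<close>
  wl       :: "'i \<Rightarrow> (nat \<times> nat) list"      \<comment> \<open>FIFO wait-lists\<close>
  holders  :: "'i \<Rightarrow> (nat \<times> nat) set"
  pc       :: "nat \<Rightarrow> nat"
  loc      :: "nat \<Rightarrow> 'l"
  holding  :: "nat \<Rightarrow> bool"                \<comment> \<open>whether the thread holds a lock (at most one)\<close>

definition enqueue :: "('i, 'v, 'l) txn list \<Rightarrow> nat \<Rightarrow> ('i \<Rightarrow> (nat \<times> nat) list) \<Rightarrow> ('i \<Rightarrow> (nat \<times> nat) list)" where
  "enqueue ts k W =
     fold (\<lambda>j W. W(item (opat ts (k, j)) := W (item (opat ts (k, j))) @ [(k, j)]))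
          [0..<length (ops (ts ! k))] W"

definition compatible :: "('i, 'v, 'l) txn list \<Rightarrow> (nat \<times> nat) set \<Rightarrow> nat \<times> nat \<Rightarrow> bool" where
  "compatible ts H r \<longleftrightarrow>
     H = {} \<or> (lock_type (kind (opat ts r)) = S \<and> (\<forall>r'\<in>H. lock_type (kind (opat ts r')) = S))"

inductive cstep :: "('i, 'v, 'l) txn list \<Rightarrow> ('i, 'v, 'l) cstate \<Rightarrow> ('i, 'v, 'l) cstate \<Rightarrow> bool"
  for ts where
  launch:
    "launched s < length ts \<Longrightarrow>
     cstep ts s (s\<lparr>wl := enqueue ts (launched s) (wl s), launched := Suc (launched s)\<rparr>)"
| acquire:
    "\<lbrakk> k < launched s; \<not> holding s k; pc s k < length (ops (ts ! k));
       x = item (opat ts (k, pc s k)); wl s x = (k, pc s k) # rest;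
       compatible ts (holders s x) (k, pc s k) \<rbrakk> \<Longrightarrow>
     cstep ts s (s\<lparr>wl := (wl s)(x := rest),
                   holders := (holders s)(x := insert (k, pc s k) (holders s x)),
                   holding := (holding s)(k := True)\<rparr>)"
| release:
    "\<lbrakk> k < launched s; holding s k; eo = opat ts (k, pc s k); x = item eo;
       eff eo (loc s k) (store s x) = (l', v') \<rbrakk> \<Longrightarrow>
     cstep ts s (s\<lparr>store := (store s)(x := v'),
                   loc := (loc s)(k := l'),
                   holders := (holders s)(x := holders s x - {(k, pc s k)}),
                   pc := (pc s)(k := Suc (pc s k)),
                   holding := (holding s)(k := False)\<rparr>)"

definition init_state :: "('i, 'v, 'l) txn list \<Rightarrow> ('i \<Rightarrow> 'v) \<Rightarrow> ('i, 'v, 'l) cstate" where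
  "init_state ts \<sigma> =
     \<lparr>store = \<sigma>, launched = 0, wl = (\<lambda>_. []), holders = (\<lambda>_. {}), pc = (\<lambda>_. 0),
      loc = (\<lambda>k. init (ts ! k)), holding = (\<lambda>_. False)\<rparr>"

definition finished :: "('i, 'v, 'l) txn list \<Rightarrow> ('i, 'v, 'l) cstate \<Rightarrow> bool" where
  "finished ts s \<longleftrightarrow> launched s = length ts \<and> (\<forall>k<length ts. pc s k = length (ops (ts ! k)))"

text \<open>Streaming consistency of the global schedule: every complete concurrent execution gives
the same item contents and the same per-transaction results (answers) as serial execution in
timestamp order.\<close>

definition streaming_consistent :: "('i, 'v, 'l) txn list \<Rightarrow> ('i \<Rightarrow> 'v) \<Rightarrow> bool" where
  "streaming_consistent ts \<sigma>0 \<longleftrightarrow>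
     (\<forall>s. (cstep ts)\<^sup>*\<^sup>* (init_state ts \<sigma>0) s \<and> finished ts s \<longrightarrow>
          store s = fst (serial ts \<sigma>0) \<and>
          (\<forall>k<length ts. loc s k = snd (serial ts \<sigma>0) ! k))"

end

theory Submission
  imports Defs "HOL-Library.Product_Lexorder"
begin

(* Request (k, j), the j-th operation of transaction k, is enqueued after all requests of
   transactions before k and of earlier operations of k, so the wait-lists are sorted
   lexicographically and the locks on an item are granted in request order. An exclusive lock
   is granted only when all earlier requests on its item have completed, and it blocks all later
   ones until it completes. Hence the completed writes on an item always form an initial segment
   of its writes, and when an operation runs, its item holds the value it has at the same point
   of the serial execution. By induction over the execution, the items and the local states of
   the threads agree with the serial execution, and at the end this is streaming consistency. *)

lemma run_ops_append:
  "run_ops (xs @ ys) l \<sigma> = (case run_ops xs l \<sigma> of (l', \<sigma>') \<Rightarrow> run_ops ys l' \<sigma>')"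
  by (induction xs arbitrary: l \<sigma>) (auto split: prod.split)

lemma serial_append:
  "serial (xs @ ys) \<sigma> =
     (case serial xs \<sigma> of (\<sigma>', ls) \<Rightarrow> (case serial ys \<sigma>' of (\<sigma>'', ls') \<Rightarrow> (\<sigma>'', ls @ ls')))"
  by (induction xs arbitrary: \<sigma>) (auto split: prod.split)

lemma length_serial: "length (snd (serial ts \<sigma>)) = length ts"
  by (induction ts arbitrary: \<sigma>) (auto split: prod.split, metis snd_conv)

lemma filter_Cons_remove:
  assumes "distinct xs" "filter P xs = a # rest"
  shows "rest = filter (\<lambda>y. a \<noteq> y \<and> P y) xs"
proof -
  have "rest = remove1 a (filter P xs)"
    using assms(2) by simp
  also have "\<dots> = filter (\<lambda>y. a \<noteq> y \<and> P y) xs"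
    using assms(1) by (simp add: filter_remove1[symmetric] distinct_remove1_removeAll removeAll_filter_not_eq)
  finally show ?thesis .
qed

lemma filter_Cons_least:
  fixes xs :: "'a::order list"
  assumes "sorted_wrt (<) xs" "filter P xs = a # rest" "y \<in> set xs" "P y"
  shows "a \<le> y"
proof -
  have "sorted_wrt (<) (a # rest)"
    using assms(1,2) by (metis sorted_wrt_filter)
  moreover have "y \<in> set (a # rest)"
    using assms(2-4) by (metis set_filter mem_Collect_eq)
  ultimately show ?thesis
    by (auto simp: less_imp_le)
qed

subsection \<open>The serial execution at intermediate points\<close>

definition nops :: "('i, 'v, 'l) txn list \<Rightarrow> nat \<Rightarrow> nat" where
  "nops ts k = length (ops (ts ! k))"

definition is_request :: "('i, 'v, 'l) txn list \<Rightarrow> nat \<times> nat \<Rightarrow> bool" where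
  "is_request ts r \<longleftrightarrow> fst r < length ts \<and> snd r < nops ts (fst r)"

definition req_item :: "('i, 'v, 'l) txn list \<Rightarrow> nat \<times> nat \<Rightarrow> 'i" where
  "req_item ts r = item (opat ts r)"

definition is_write :: "('i, 'v, 'l) txn list \<Rightarrow> nat \<times> nat \<Rightarrow> bool" where
  "is_write ts r \<longleftrightarrow> kind (opat ts r) \<noteq> READ"

lemma reads_pure_eff:
  assumes "reads_pure ts" "is_request ts r" "\<not> is_write ts r"
  shows "snd (eff (opat ts r) l v) = v"
  using assms unfolding reads_pure_def is_request_def is_write_def opat_def nops_def
  by (metis nth_mem)

text \<open>The point \<open>(k, j)\<close> of the serial execution lies just before the \<open>j\<close>-th operation of
  transaction \<open>k\<close>; the point \<open>(length ts, 0)\<close> is its end.\<close>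

definition position :: "('i, 'v, 'l) txn list \<Rightarrow> nat \<times> nat \<Rightarrow> bool" where
  "position ts p \<longleftrightarrow> (fst p < length ts \<and> snd p \<le> nops ts (fst p)) \<or> p = (length ts, 0)"

definition serial_at :: "('i, 'v, 'l) txn list \<Rightarrow> ('i \<Rightarrow> 'v) \<Rightarrow> nat \<times> nat \<Rightarrow> 'l \<times> ('i \<Rightarrow> 'v)" where
  "serial_at ts \<sigma> p =
     run_ops (take (snd p) (ops (ts ! fst p))) (init (ts ! fst p)) (fst (serial (take (fst p) ts) \<sigma>))"

lemma serial_at_first: "serial_at ts \<sigma> (k, 0) = (init (ts ! k), fst (serial (take k ts) \<sigma>))"
  by (simp add: serial_at_def)

lemma serial_at_Suc:
  assumes "j < nops ts k"
    and "eff (opat ts (k, j)) (fst (serial_at ts \<sigma> (k, j))) (snd (serial_at ts \<sigma> (k, j)) (req_item ts (k, j)))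
           = (l', v')"
  shows "serial_at ts \<sigma> (k, Suc j) = (l', (snd (serial_at ts \<sigma> (k, j)))(req_item ts (k, j) := v'))"
  using assms unfolding serial_at_def nops_def opat_def req_item_def
  by (auto simp: take_Suc_conv_app_nth run_ops_append split: prod.split)

lemma serial_at_last:
  assumes "k < length ts"
  shows "serial_at ts \<sigma> (k, nops ts k) = (snd (serial ts \<sigma>) ! k, snd (serial_at ts \<sigma> (Suc k, 0)))"
proof -
  have split: "ts = take k ts @ ts ! k # drop (Suc k) ts"
    using assms by (simp add: id_take_nth_drop)
  have "length (snd (serial (take k ts) \<sigma>)) = k"
    using assms by (simp add: length_serial)
  then have "snd (serial ts \<sigma>) ! k = fst (serial_at ts \<sigma> (k, nops ts k))"
    by (subst split) (auto simp: serial_at_def nops_def serial_append nth_append split: prod.split)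
  moreover have "snd (serial_at ts \<sigma> (k, nops ts k)) = snd (serial_at ts \<sigma> (Suc k, 0))"
    using assms by (auto simp: serial_at_def nops_def take_Suc_conv_app_nth serial_append split: prod.split)
  ultimately show ?thesis by (metis prod.collapse)
qed

lemma serial_at_end: "snd (serial_at ts \<sigma> (length ts, 0)) = fst (serial ts \<sigma>)"
  by (simp add: serial_at_def)

lemma serial_at_Suc_frame:
  assumes "reads_pure ts" "is_request ts (k, j)" "req_item ts (k, j) = x \<longrightarrow> \<not> is_write ts (k, j)"
  shows "snd (serial_at ts \<sigma> (k, Suc j)) x = snd (serial_at ts \<sigma> (k, j)) x"
proof -
  obtain l' v' where eff: "eff (opat ts (k, j)) (fst (serial_at ts \<sigma> (k, j)))
      (snd (serial_at ts \<sigma> (k, j)) (req_item ts (k, j))) = (l', v')"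
    by fastforce
  have "req_item ts (k, j) = x \<Longrightarrow> v' = snd (serial_at ts \<sigma> (k, j)) x"
    using reads_pure_eff[OF assms(1,2)] assms(3) eff by (metis snd_conv)
  then show ?thesis
    using serial_at_Suc[OF _ eff] assms(2) by (auto simp: is_request_def)
qed

lemma serial_at_frame_within:
  assumes "reads_pure ts" "k < length ts" "j1 \<le> j2" "j2 \<le> nops ts k"
    and "\<And>j. j1 \<le> j \<Longrightarrow> j < j2 \<Longrightarrow> req_item ts (k, j) = x \<Longrightarrow> \<not> is_write ts (k, j)"
  shows "snd (serial_at ts \<sigma> (k, j2)) x = snd (serial_at ts \<sigma> (k, j1)) x"
  using assms(3-)
proof (induction j2 rule: dec_induct)
  case (step j)
  then have "is_request ts (k, j)"
    using assms(2) by (simp add: is_request_def)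
  then show ?case
    using step serial_at_Suc_frame[OF assms(1)] by simp
qed simp

lemma serial_at_frame:
  assumes rp: "reads_pure ts" and "position ts (k1, j1)" "position ts (k2, j2)" "(k1, j1) \<le> (k2, j2)"
    and "\<And>r. is_request ts r \<Longrightarrow> req_item ts r = x \<Longrightarrow> (k1, j1) \<le> r \<Longrightarrow> r < (k2, j2) \<Longrightarrow> \<not> is_write ts r"
  shows "snd (serial_at ts \<sigma> (k2, j2)) x = snd (serial_at ts \<sigma> (k1, j1)) x"
  using assms(3-)
proof (induction k2 arbitrary: j2)
  case 0
  then show ?case
    using serial_at_frame_within[OF rp] assms(2) by (auto simp: position_def is_request_def)
next
  case (Suc m)
  show ?case
  proof (cases "k1 = Suc m")
    case True
    then show ?thesis
      using serial_at_frame_within[OF rp] assms(2) Suc.prems by (auto simp: position_def is_request_def)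
  next
    case False
    then have "k1 \<le> m" and m: "m < length ts"
      using Suc.prems(1,2) by (auto simp: position_def)
    have "snd (serial_at ts \<sigma> (Suc m, j2)) x = snd (serial_at ts \<sigma> (Suc m, 0)) x"
      using serial_at_frame_within[OF rp, of "Suc m" 0 j2] Suc.prems \<open>k1 \<le> m\<close>
      by (cases "j2 = 0") (auto simp: position_def is_request_def)
    also have "\<dots> = snd (serial_at ts \<sigma> (m, nops ts m)) x"
      using serial_at_last[OF m] by simp
    also have "\<dots> = snd (serial_at ts \<sigma> (k1, j1)) x"
    proof (rule Suc.IH)
      show "position ts (m, nops ts m)"
        using m by (simp add: position_def)
      show "(k1, j1) \<le> (m, nops ts m)"
        using \<open>k1 \<le> m\<close> m assms(2) by (cases "k1 = m") (auto simp: position_def)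
      show "\<not> is_write ts r"
        if "is_request ts r" "req_item ts r = x" "(k1, j1) \<le> r" "r < (m, nops ts m)" for r
      proof -
        have "r < (Suc m, j2)"
          using that(4) by (cases r) auto
        then show ?thesis
          using Suc.prems(3) that(1-3) by blast
      qed
    qed
    finally show ?thesis .
  qed
qed

subsection \<open>Lock states and wait-lists\<close>

definition completed :: "('i, 'v, 'l) cstate \<Rightarrow> nat \<times> nat \<Rightarrow> bool" where
  "completed s r \<longleftrightarrow> snd r < pc s (fst r)"

definition locked :: "('i, 'v, 'l) cstate \<Rightarrow> nat \<times> nat \<Rightarrow> bool" where
  "locked s r \<longleftrightarrow> holding s (fst r) \<and> snd r = pc s (fst r)"

definition granted :: "('i, 'v, 'l) cstate \<Rightarrow> nat \<times> nat \<Rightarrow> bool" where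
  "granted s r \<longleftrightarrow> completed s r \<or> locked s r"

definition requests :: "('i, 'v, 'l) txn list \<Rightarrow> nat \<Rightarrow> (nat \<times> nat) list" where
  "requests ts n = concat (map (\<lambda>k. map (Pair k) [0..<nops ts k]) [0..<n])"

definition waiting :: "('i, 'v, 'l) txn list \<Rightarrow> ('i, 'v, 'l) cstate \<Rightarrow> 'i \<Rightarrow> nat \<times> nat \<Rightarrow> bool" where
  "waiting ts s x r \<longleftrightarrow> req_item ts r = x \<and> \<not> locked s r \<and> pc s (fst r) \<le> snd r"

lemma requests_Suc: "requests ts (Suc n) = requests ts n @ map (Pair n) [0..<nops ts n]"
  by (simp add: requests_def)

lemma set_requests: "set (requests ts n) = {r. fst r < n \<and> snd r < nops ts (fst r)}"
  by (auto simp: requests_def)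

lemma sorted_requests: "sorted_wrt (<) (requests ts n)"
proof (induction n)
  case (Suc n)
  have "sorted_wrt (<) (map (Pair n) [0..<nops ts n])"
    by (simp add: sorted_wrt_map sorted_wrt_iff_nth_less)
  then show ?case
    using Suc by (auto simp: requests_Suc sorted_wrt_append set_requests)
qed (simp add: requests_def)

lemma enqueue_eq:
  "enqueue ts k W x = W x @ filter (\<lambda>r. req_item ts r = x) (map (Pair k) [0..<nops ts k])"
proof -
  have "fold (\<lambda>j W. W(item (opat ts (k, j)) := W (item (opat ts (k, j))) @ [(k, j)])) js W x
      = W x @ filter (\<lambda>r. req_item ts r = x) (map (Pair k) js)" for js W
    by (induction js arbitrary: W) (auto simp: req_item_def)
  then show ?thesis
    by (simp add: enqueue_def nops_def)
qed

subsection \<open>The invariant of the concurrent execution\<close>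

definition counters_ok :: "('i, 'v, 'l) txn list \<Rightarrow> ('i, 'v, 'l) cstate \<Rightarrow> bool" where
  "counters_ok ts s \<longleftrightarrow>
     launched s \<le> length ts \<and>
     (\<forall>k. launched s \<le> k \<longrightarrow> pc s k = 0 \<and> \<not> holding s k) \<and>
     (\<forall>k<length ts. pc s k \<le> nops ts k) \<and>
     (\<forall>k. holding s k \<longrightarrow> pc s k < nops ts k)"

definition lock_tables_ok :: "('i, 'v, 'l) txn list \<Rightarrow> ('i, 'v, 'l) cstate \<Rightarrow> bool" where
  "lock_tables_ok ts s \<longleftrightarrow>
     (\<forall>x. wl s x = filter (waiting ts s x) (requests ts (launched s))) \<and>
     (\<forall>x. holders s x = {r. is_request ts r \<and> req_item ts r = x \<and> locked s r})"

definition conflict_ordered :: "('i, 'v, 'l) txn list \<Rightarrow> ('i, 'v, 'l) cstate \<Rightarrow> bool" where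
  "conflict_ordered ts s \<longleftrightarrow>
     (\<forall>r r'. is_request ts r \<and> is_request ts r' \<and> req_item ts r' = req_item ts r \<and>
        granted s r \<and> r' < r \<longrightarrow>
          granted s r' \<and> (is_write ts r \<or> is_write ts r' \<longrightarrow> completed s r'))"

definition writes_completed_below :: "('i, 'v, 'l) txn list \<Rightarrow> ('i, 'v, 'l) cstate \<Rightarrow> 'i \<Rightarrow> nat \<times> nat \<Rightarrow> bool" where
  "writes_completed_below ts s x p \<longleftrightarrow>
     (\<forall>r. is_request ts r \<and> req_item ts r = x \<and> is_write ts r \<longrightarrow> (completed s r \<longleftrightarrow> r < p))"

text \<open>Reads do not change values, so the store may be compared with the serial execution at any
  point that separates the completed writes on the item from the pending ones.\<close>

definition agrees_with_serial :: "('i, 'v, 'l) txn list \<Rightarrow> ('i \<Rightarrow> 'v) \<Rightarrow> ('i, 'v, 'l) cstate \<Rightarrow> bool" where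
  "agrees_with_serial ts \<sigma> s \<longleftrightarrow>
     (\<forall>k<length ts. loc s k = fst (serial_at ts \<sigma> (k, pc s k))) \<and>
     (\<forall>x p. position ts p \<and> writes_completed_below ts s x p \<longrightarrow> store s x = snd (serial_at ts \<sigma> p) x)"

lemma conflict_orderedD:
  assumes "conflict_ordered ts s" "is_request ts r" "is_request ts r'" "req_item ts r' = req_item ts r"
    and "granted s r" "r' < r"
  shows "granted s r'" and "is_write ts r \<or> is_write ts r' \<Longrightarrow> completed s r'"
  using assms unfolding conflict_ordered_def by blast+

lemma writes_completed_belowD:
  assumes "writes_completed_below ts s x p" "is_request ts r" "req_item ts r = x" "is_write ts r"
  shows "completed s r \<longleftrightarrow> r < p"
  using assms unfolding writes_completed_below_def by blast

lemma store_eq_serial_at: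
  assumes "agrees_with_serial ts \<sigma> s" "position ts p" "writes_completed_below ts s x p"
  shows "store s x = snd (serial_at ts \<sigma> p) x"
  using assms unfolding agrees_with_serial_def by blast

lemma counters_ok_step:
  assumes "cstep ts s s'" "counters_ok ts s"
  shows "counters_ok ts s'"
  using assms by cases (auto simp: counters_ok_def nops_def)

lemma wait_list_head:
  assumes "counters_ok ts s" "lock_tables_ok ts s" "wl s x = r # rest"
  shows "is_request ts r" "waiting ts s x r"
    and "rest = filter (\<lambda>q. r \<noteq> q \<and> waiting ts s x q) (requests ts (launched s))"
    and "\<And>q. is_request ts q \<Longrightarrow> req_item ts q = x \<Longrightarrow> q < r \<Longrightarrow> granted s q"
proof -
  have wl: "filter (waiting ts s x) (requests ts (launched s)) = r # rest"
    using assms(2,3) by (simp add: lock_tables_ok_def)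
  then have "r \<in> set (filter (waiting ts s x) (requests ts (launched s)))"
    by simp
  then show r: "is_request ts r" "waiting ts s x r"
    using assms(1) by (auto simp: set_requests is_request_def counters_ok_def)
  show "rest = filter (\<lambda>q. r \<noteq> q \<and> waiting ts s x q) (requests ts (launched s))"
    using filter_Cons_remove[OF strict_sorted_iff[THEN iffD1, OF sorted_requests, THEN conjunct2] wl] .
  fix q
  assume q: "is_request ts q" "req_item ts q = x" "q < r"
  show "granted s q"
  proof (rule ccontr)
    assume "\<not> granted s q"
    then have "waiting ts s x q"
      using q by (auto simp: granted_def completed_def waiting_def)
    moreover have "q \<in> set (requests ts (launched s))"
      using q r(2) \<open>r \<in> set _\<close> by (auto simp: set_requests is_request_def less_prod_def')
    ultimately have "r \<le> q"
      using filter_Cons_least[OF sorted_requests wl] by blast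
    then show False
      using q(3) by simp
  qed
qed

lemma lock_tables_ok_step:
  assumes "cstep ts s s'" "counters_ok ts s" "lock_tables_ok ts s"
  shows "lock_tables_ok ts s'"
  using assms(1)
proof cases
  case launch
  let ?new = "map (Pair (launched s)) [0..<nops ts (launched s)]"
  have unlaunched: "pc s (launched s) = 0" "\<not> holding s (launched s)"
    using assms(2) by (auto simp: counters_ok_def)
  have "filter (\<lambda>r. req_item ts r = x) ?new = filter (waiting ts s x) ?new" for x
    using unlaunched by (intro filter_cong) (auto simp: waiting_def locked_def)
  moreover have "waiting ts s' = waiting ts s" "locked s' = locked s"
    using launch by (auto simp: waiting_def locked_def fun_eq_iff)
  ultimately show ?thesis
    using assms(3) launch by (auto simp: lock_tables_ok_def enqueue_eq requests_Suc)
next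
  case (acquire k x rest)
  define r where "r = (k, pc s k)"
  have r: "is_request ts r" "waiting ts s x r"
    and rest: "rest = filter (\<lambda>q. r \<noteq> q \<and> waiting ts s x q) (requests ts (launched s))"
    using wait_list_head[OF assms(2,3)] acquire by (simp_all add: r_def)
  have s': "wl s' = (wl s)(x := rest)" "holders s' = (holders s)(x := insert r (holders s x))"
    "launched s' = launched s" "pc s' = pc s"
    using acquire by (simp_all add: r_def)
  have locked': "locked s' q \<longleftrightarrow> locked s q \<or> q = r" for q
    using acquire by (cases q) (auto simp: locked_def r_def)
  have waiting': "waiting ts s' y q \<longleftrightarrow> waiting ts s y q \<and> q \<noteq> r" for y q
    by (auto simp: waiting_def locked' s'(4))
  have "req_item ts r = x"
    using r(2) by (simp add: waiting_def)
  then show ?thesis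
    using assms(3) r(1) rest
    by (auto simp: lock_tables_ok_def waiting' locked' s' waiting_def intro!: filter_cong)
next
  case (release k eo x l' v')
  define r where "r = (k, pc s k)"
  have s': "wl s' = wl s" "holders s' = (holders s)(x := holders s x - {r})" "launched s' = launched s"
    using release by (simp_all add: r_def)
  have locked': "locked s' q \<longleftrightarrow> locked s q \<and> q \<noteq> r" for q
    using release by (cases q) (auto simp: locked_def r_def)
  have waiting': "waiting ts s' = waiting ts s"
    using release by (intro ext) (auto simp: waiting_def locked_def split: if_splits)
  have "req_item ts r = x"
    using release by (simp add: req_item_def r_def)
  then show ?thesis
    using assms(3) by (auto simp: lock_tables_ok_def waiting' locked' s')
qed

lemma compatible_holder_reads:
  assumes "lock_tables_ok ts s" "compatible ts (holders s x) r"
    and "is_request ts q" "req_item ts q = x" "locked s q"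
  shows "\<not> is_write ts q \<and> \<not> is_write ts r"
proof -
  have lock_S: "lock_type k = S \<longleftrightarrow> k = READ" for k
    by (cases k) simp_all
  have "q \<in> holders s x"
    using assms(1,3-5) by (simp add: lock_tables_ok_def)
  then show ?thesis
    using assms(2) by (auto simp: compatible_def is_write_def lock_S)
qed

lemma conflict_ordered_step:
  assumes "cstep ts s s'" "counters_ok ts s" "lock_tables_ok ts s" "conflict_ordered ts s"
  shows "conflict_ordered ts s'"
  using assms(1)
proof cases
  case launch
  then have "completed s' = completed s" "granted s' = granted s"
    by (auto simp: granted_def completed_def locked_def)
  then show ?thesis
    using assms(4) by (simp add: conflict_ordered_def)
next
  case (acquire k x rest)
  define r where "r = (k, pc s k)"
  have r: "is_request ts r" "waiting ts s x r"
    and before_r_granted: "\<And>q. is_request ts q \<Longrightarrow> req_item ts q = x \<Longrightarrow> q < r \<Longrightarrow> granted s q"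
    using wait_list_head[OF assms(2,3)] acquire by (simp_all add: r_def)
  have completed': "completed s' = completed s"
    using acquire by (auto simp: completed_def)
  have granted': "granted s' q \<longleftrightarrow> granted s q \<or> q = r" for q
    using acquire by (cases q) (auto simp: granted_def completed_def locked_def r_def)
  have holders_read: "\<not> is_write ts q \<and> \<not> is_write ts r"
    if "is_request ts q" "req_item ts q = x" "locked s q" for q
    using compatible_holder_reads[OF assms(3)] acquire that by (simp add: r_def)
  show ?thesis
    unfolding conflict_ordered_def completed'
  proof (intro allI impI)
    fix r1 r2
    assume a: "is_request ts r1 \<and> is_request ts r2 \<and> req_item ts r2 = req_item ts r1 \<and>
      granted s' r1 \<and> r2 < r1"
    show "granted s' r2 \<and> (is_write ts r1 \<or> is_write ts r2 \<longrightarrow> completed s r2)"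
    proof (cases "r1 = r")
      case True
      have "req_item ts r2 = x"
        using a r(2) True by (simp add: waiting_def)
      then have "granted s r2" "locked s r2 \<Longrightarrow> \<not> is_write ts r2 \<and> \<not> is_write ts r"
        using a True before_r_granted holders_read by blast+
      then show ?thesis
        using True granted' unfolding granted_def by blast
    next
      case False
      then have "granted s r1"
        using a granted' by blast
      then have "granted s r2 \<and> (is_write ts r1 \<or> is_write ts r2 \<longrightarrow> completed s r2)"
        using a assms(4) unfolding conflict_ordered_def by blast
      then show ?thesis
        using granted' by blast
    qed
  qed
next
  case (release k eo x l' v')
  define r where "r = (k, pc s k)"
  have completed': "completed s' q \<longleftrightarrow> completed s q \<or> q = r" for q
    using release by (cases q) (auto simp: completed_def r_def)
  have "granted s' = granted s"
    using release by (intro ext) (auto simp: granted_def completed_def locked_def split: if_splits)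
  then show ?thesis
    using assms(4) by (auto simp: conflict_ordered_def completed')
qed

lemma not_completed_after_locked_conflict:
  assumes "conflict_ordered ts s" "is_request ts r" "is_request ts q" "req_item ts q = req_item ts r"
    and "locked s r" "r < q" "is_write ts r \<or> is_write ts q"
  shows "\<not> completed s q"
proof
  assume "completed s q"
  then have "completed s r"
    using conflict_orderedD(2)[OF assms(1,3,2)] assms(4,6,7) by (auto simp: granted_def)
  then show False
    using assms(5) by (simp add: locked_def completed_def)
qed

lemma store_eq_serial_at_locked:
  assumes "conflict_ordered ts s" "agrees_with_serial ts \<sigma> s" "is_request ts r" "locked s r"
  shows "store s (req_item ts r) = snd (serial_at ts \<sigma> r) (req_item ts r)"
proof -
  have not_completed: "\<not> completed s r"
    using assms(4) by (simp add: locked_def completed_def)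
  have "writes_completed_below ts s (req_item ts r) r"
    unfolding writes_completed_below_def
  proof (intro allI impI)
    fix q
    assume "is_request ts q \<and> req_item ts q = req_item ts r \<and> is_write ts q"
    then have q: "is_request ts q" "req_item ts q = req_item ts r" "is_write ts q"
      by simp_all
    show "completed s q \<longleftrightarrow> q < r"
    proof
      assume "completed s q"
      show "q < r"
      proof (rule ccontr)
        assume "\<not> q < r"
        then have "r < q"
          using \<open>completed s q\<close> not_completed by (metis neq_iff)
        then show False
          using not_completed_after_locked_conflict[OF assms(1,3) q(1,2) assms(4)] q(3) \<open>completed s q\<close>
          by blast
      qed
    next
      assume "q < r"
      then show "completed s q"
        using conflict_orderedD(2)[OF assms(1,3) q(1,2)] assms(4) q(3) by (simp add: granted_def)
    qed
  qed
  moreover have "position ts r"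
    using assms(3) by (auto simp: is_request_def position_def)
  ultimately show ?thesis
    using store_eq_serial_at[OF assms(2)] by blast
qed

lemma agrees_with_serial_release:
  assumes rp: "reads_pure ts" and inv: "counters_ok ts s" "conflict_ordered ts s" "agrees_with_serial ts \<sigma> s"
    and k: "k < launched s" "holding s k" and x: "x = req_item ts (k, pc s k)"
    and eff: "eff (opat ts (k, pc s k)) (loc s k) (store s x) = (l', v')"
  shows "agrees_with_serial ts \<sigma> (s\<lparr>store := (store s)(x := v'), loc := (loc s)(k := l'),
    holders := H, pc := (pc s)(k := Suc (pc s k)), holding := (holding s)(k := False)\<rparr>)"
    (is "agrees_with_serial ts \<sigma> ?s'")
proof -
  define r where "r = (k, pc s k)"
  have r: "is_request ts r" "locked s r" "req_item ts r = x"
    using inv(1) k x by (auto simp: r_def counters_ok_def is_request_def locked_def)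
  have completed': "completed ?s' q \<longleftrightarrow> completed s q \<or> q = r" for q
    by (cases q) (auto simp: completed_def r_def)
  have "loc s k = fst (serial_at ts \<sigma> r)" "store s x = snd (serial_at ts \<sigma> r) x"
    using inv(1,3) k store_eq_serial_at_locked[OF inv(2,3) r(1,2)] r(3)
    by (auto simp: agrees_with_serial_def counters_ok_def r_def)
  then have after_r: "serial_at ts \<sigma> (k, Suc (pc s k)) = (l', (snd (serial_at ts \<sigma> r))(x := v'))"
    using serial_at_Suc[of "pc s k" ts k] eff r x by (simp add: r_def is_request_def)
  have store': "store ?s' y = snd (serial_at ts \<sigma> p) y"
    if p: "position ts p" "writes_completed_below ts ?s' y p" for y p
  proof (cases "y = x \<and> is_write ts r")
    case True
    then have "r < p"
      using writes_completed_belowD[OF p(2) r(1)] r(3) completed' by simp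
    have no_write: "\<not> is_write ts q"
      if q: "is_request ts q" "req_item ts q = x" "(k, Suc (pc s k)) \<le> q" "q < p" for q
    proof
      assume "is_write ts q"
      have "r < q"
        using q(3) by (cases q) (auto simp: r_def)
      moreover have "completed ?s' q"
        using writes_completed_belowD[OF p(2) q(1) _ \<open>is_write ts q\<close>] q(2,4) True by simp
      ultimately show False
        using not_completed_after_locked_conflict[OF inv(2) r(1) q(1)] q(2) r(2,3) True completed'
        by auto
    qed
    obtain k2 j2 where p_eq: "p = (k2, j2)"
      by fastforce
    have "snd (serial_at ts \<sigma> p) x = snd (serial_at ts \<sigma> (k, Suc (pc s k))) x"
      unfolding p_eq
    proof (rule serial_at_frame[OF rp _ _ _ no_write])
      show "position ts (k, Suc (pc s k))"
        using r(1) by (simp add: position_def is_request_def r_def)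
      show "(k, Suc (pc s k)) \<le> (k2, j2)"
        using \<open>r < p\<close> by (auto simp: p_eq r_def)
    qed (use p(1) p_eq in simp_all)
    then show ?thesis
      using True after_r by simp
  next
    case False
    then have "writes_completed_below ts s y p"
      using p(2) r(3) completed' by (auto simp: writes_completed_below_def)
    moreover have "y = x \<Longrightarrow> v' = store s x"
      using False reads_pure_eff[OF rp r(1)] eff by (metis r_def snd_conv)
    ultimately show ?thesis
      using store_eq_serial_at[OF inv(3) p(1)] by auto
  qed
  show ?thesis
    using inv(3) after_r store' by (auto simp: agrees_with_serial_def)
qed

lemma agrees_with_serial_step:
  assumes "reads_pure ts" "cstep ts s s'"
    and "counters_ok ts s" "conflict_ordered ts s" "agrees_with_serial ts \<sigma> s"
  shows "agrees_with_serial ts \<sigma> s'"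
  using assms(2)
proof cases
  case (release k eo x l' v')
  then show ?thesis
    using agrees_with_serial_release[OF assms(1,3-5)] by (simp add: req_item_def)
qed (use assms(5) in \<open>auto simp: agrees_with_serial_def writes_completed_below_def completed_def\<close>)

definition invariant :: "('i, 'v, 'l) txn list \<Rightarrow> ('i \<Rightarrow> 'v) \<Rightarrow> ('i, 'v, 'l) cstate \<Rightarrow> bool" where
  "invariant ts \<sigma> s \<longleftrightarrow>
     counters_ok ts s \<and> lock_tables_ok ts s \<and> conflict_ordered ts s \<and> agrees_with_serial ts \<sigma> s"

lemma invariant_init:
  assumes rp: "reads_pure ts"
  shows "invariant ts \<sigma> (init_state ts \<sigma>)"
proof -
  let ?s = "init_state ts \<sigma>"
  have idle: "\<not> completed ?s r" "\<not> locked ?s r" "\<not> granted ?s r" for r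
    by (simp_all add: init_state_def completed_def locked_def granted_def)
  have "store ?s x = snd (serial_at ts \<sigma> p) x"
    if p: "position ts p" "writes_completed_below ts ?s x p" for x p
  proof -
    obtain k j where p_eq: "p = (k, j)"
      by fastforce
    have "snd (serial_at ts \<sigma> (k, j)) x = snd (serial_at ts \<sigma> (0, 0)) x"
    proof (rule serial_at_frame[OF rp])
      show "position ts (0, 0)"
        by (cases ts) (simp_all add: position_def)
      show "\<not> is_write ts r" if "is_request ts r" "req_item ts r = x" "r < (k, j)" for r
        using writes_completed_belowD[OF p(2) that(1,2)] that(3) idle(1) p_eq by blast
    qed (use p(1) p_eq in simp_all)
    then show ?thesis
      by (simp add: p_eq serial_at_first init_state_def)
  qed
  moreover have "\<forall>k<length ts. loc ?s k = fst (serial_at ts \<sigma> (k, pc ?s k))"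
    by (simp add: init_state_def serial_at_first)
  ultimately have "agrees_with_serial ts \<sigma> ?s"
    by (simp add: agrees_with_serial_def)
  moreover have "counters_ok ts ?s" "lock_tables_ok ts ?s" "conflict_ordered ts ?s"
    by (simp_all add: counters_ok_def lock_tables_ok_def conflict_ordered_def requests_def idle)
      (simp_all add: init_state_def)
  ultimately show ?thesis
    by (simp add: invariant_def)
qed

lemma invariant_step:
  assumes "reads_pure ts" "cstep ts s s'" "invariant ts \<sigma> s"
  shows "invariant ts \<sigma> s'"
  using assms counters_ok_step lock_tables_ok_step conflict_ordered_step agrees_with_serial_step
  unfolding invariant_def by blast

lemma invariant_reachable:
  assumes "reads_pure ts" "(cstep ts)\<^sup>*\<^sup>* (init_state ts \<sigma>) s"
  shows "invariant ts \<sigma> s"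
  using assms(2) by induction (use invariant_init invariant_step assms(1) in blast)+

lemma finished_agrees_with_serial:
  assumes "agrees_with_serial ts \<sigma> s" "finished ts s"
  shows "store s = fst (serial ts \<sigma>)" "\<forall>k<length ts. loc s k = snd (serial ts \<sigma>) ! k"
proof -
  have pc: "\<forall>k<length ts. pc s k = nops ts k"
    using assms(2) by (simp add: finished_def nops_def)
  then have "writes_completed_below ts s x (length ts, 0)" for x
    by (auto simp: writes_completed_below_def is_request_def completed_def)
  moreover have "position ts (length ts, 0)"
    by (simp add: position_def)
  ultimately show "store s = fst (serial ts \<sigma>)"
    using store_eq_serial_at[OF assms(1)] by (auto simp: serial_at_end[symmetric])
  show "\<forall>k<length ts. loc s k = snd (serial ts \<sigma>) ! k"
    using assms(1) pc by (simp add: agrees_with_serial_def serial_at_last)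
qed

theorem theorem4:
  fixes ts :: "('i, 'v, 'l) txn list" and \<sigma>0 :: "'i \<Rightarrow> 'v"
  assumes "reads_pure ts"
  shows "streaming_consistent ts \<sigma>0"
  unfolding streaming_consistent_def
proof (intro allI impI)
  fix s
  assume "(cstep ts)\<^sup>*\<^sup>* (init_state ts \<sigma>0) s \<and> finished ts s"
  then have "agrees_with_serial ts \<sigma>0 s" "finished ts s"
    using invariant_reachable[OF assms] by (auto simp: invariant_def)
  then show "store s = fst (serial ts \<sigma>0) \<and> (\<forall>k<length ts. loc s k = snd (serial ts \<sigma>0) ! k)"
    using finished_agrees_with_serial by blast
qed

end
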